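(* Let $\Bbbk$ be a field and $f(t)=1+\sum_{k\ge 1}a_kt^k\in\Bbbk[[t]]$. For $k\ge 0$ let $P_{f,k}(t)\in\Bbbk[t]$ be the polynomial $$P_{f,k}(t)=(-1)^k\det\begin{pmatrix} 1&a_1t&a_2t^2&\ldots &a_kt^k\\ 1&a_1&a_2&\ldots &a_k\\ 0&1&a_1&\ldots &a_{k-1}\\ \vdots&\vdots&\ddots&\ddots&\vdots\\ 0&0&\ldots &1&a_1 \end{pmatrix}$$ (a $(k+1)\times(k+1)$ determinant whose first row is $(1,a_1t,\dots,a_kt^k)$, second row $(1,a_1,\dots,a_k)$, and whose row $r\ge 3$ has $0$ in its first $r-2$ entries, $1$ in entry $r-1$, and then $a_1,a_2,\dots$), with the convention $P_{f,0}(t)=1$. Then, as formal power series in $x$ with coefficients in $\Bbbk[t]$, $$\frac{f(tx)}{f(x)}=\sum_{k\ge 0}P_{f,k}(t)\,x^k,$$ and for all $k\ge 0$, $$P_{f,k}(st)=\sum_{i=0}^k P_{f,i}(s)\,P_{f,k-i}(t)\,t^i$$ as polynomials in the independent variables $s,t$. *)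

theory Defs
  imports "HOL-Computational_Algebra.Polynomial"
          "HOL-Computational_Algebra.Formal_Power_Series"
          "Jordan_Normal_Form.Determinant"
begin

text \<open>The (k+1) x (k+1) matrix from the paper, with 0-indexed rows i and columns j.
  Coefficients a_j = fps_nth f j (with a_0 = fps_nth f 0 = 1).
  Row i >= 1: entry j is 0 if j < i - 1, and a_(j+1-i) otherwise
  (so row 1 is (1, a_1, ..., a_k), and row i >= 2 has i-1 zeros, then 1, a_1, ...).\<close>

definition Pmat :: "'a::field fps \<Rightarrow> nat \<Rightarrow> 'a poly mat" where
  "Pmat f k = mat (k+1) (k+1) (\<lambda>(i,j).
      if i = 0 then monom (fps_nth f j) j
      else if j + 1 < i then 0 else [:fps_nth f (j + 1 - i):])"

definition Ppoly :: "'a::field fps \<Rightarrow> nat \<Rightarrow> 'a poly" ("P\<^bsub>_,_\<^esub>") where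
  "Ppoly f k = (if k = 0 then 1 else (-1)^k * det (Pmat f k))"

text \<open>f(x) and f(tx) as power series in x with coefficients in k[t].\<close>
definition fps_const_lift :: "'a::field fps \<Rightarrow> 'a poly fps" where
  "fps_const_lift f = Abs_fps (\<lambda>n. [:fps_nth f n:])"

definition fps_scaled_t :: "'a::field fps \<Rightarrow> 'a poly fps" where
  "fps_scaled_t f = Abs_fps (\<lambda>n. monom (fps_nth f n) n)"

text \<open>Bivariate polynomials in s,t as 'a poly poly: outer variable t, inner variable s.\<close>
definition var_t :: "'a::field poly poly" where "var_t = [:0, 1:]"
definition var_s :: "'a::field poly poly" where "var_s = [:[:0, 1:]:]"

definition eval2 :: "'a::field poly \<Rightarrow> 'a poly poly \<Rightarrow> 'a poly poly" where
  "eval2 p u = poly (map_poly (\<lambda>c. [:[:c:]:]) p) u"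

end

theory Submission
  imports Defs
begin

text \<open>Write \<open>1/f(x) = \<Sum>\<^sub>k b\<^sub>k x\<^sup>k\<close>. Multiplying the matrix defining \<open>P_{f,k}\<close> on the right
  by the unitriangular Toeplitz matrix \<open>(b_{l-j})\<close> keeps the determinant; it turns the rows
  \<open>x^{i-1} f(x)\<close> into the unit rows \<open>x^{i-1}\<close> and the top row into the coefficients of
  \<open>f(tx)/f(x)\<close>. Expanding along the last column shows that \<open>P_{f,k}(t)\<close> is the coefficient
  of \<open>x^k\<close> in \<open>f(tx)/f(x)\<close>. The second identity is then the coefficient form of
  \<open>f(stx)/f(x) = f(stx)/f(tx) \<cdot> f(tx)/f(x)\<close>.\<close>

definition fps_map :: "('a \<Rightarrow> 'b) \<Rightarrow> 'a fps \<Rightarrow> 'b fps" where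
  "fps_map h X = Abs_fps (\<lambda>n. h (fps_nth X n))"

lemma fps_map_nth [simp]: "fps_nth (fps_map h X) n = h (fps_nth X n)"
  by (simp add: fps_map_def)

lemma (in semiring_hom) fps_map_mult: "fps_map hom (X * Y) = fps_map hom X * fps_map hom Y"
  by (rule fps_ext) (simp add: fps_mult_nth hom_sum hom_mult)

lemma (in semiring_hom) fps_map_one: "fps_map hom 1 = 1"
  by (rule fps_ext) simp

lemma (in comm_semiring_hom) map_poly_hom_add:
  "map_poly hom (p + q) = map_poly hom p + map_poly hom q"
  by (rule poly_eqI) (simp add: coeff_map_poly hom_add)

lemma (in comm_semiring_hom) map_poly_hom_mult:
  "map_poly hom (p * q) = map_poly hom p * map_poly hom q"
  by (rule poly_eqI) (simp add: coeff_map_poly coeff_mult hom_sum hom_mult)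

interpretation const_poly_hom: comm_semiring_hom "\<lambda>c::'a::comm_semiring_1. [:c:]"
  by unfold_locales (simp_all add: one_pCons mult.commute)

lemma fps_compose_scale_scale:
  fixes X :: "'a::comm_ring_1 fps"
  shows "X oo (fps_const s * fps_X) oo (fps_const t * fps_X) = X oo (fps_const (s * t) * fps_X)"
  by (simp add: fps_compose_linear power_mult_distrib mult.assoc mult.left_commute)

lemma fps_compose_scale_mult:
  fixes X Y :: "'a::idom fps"
  shows "(X * Y) oo (fps_const c * fps_X)
    = (X oo (fps_const c * fps_X)) * (Y oo (fps_const c * fps_X))"
  by (rule fps_compose_mult_distrib) simp

definition upper_toeplitz_mat :: "'a::zero fps \<Rightarrow> nat \<Rightarrow> 'a mat" where
  "upper_toeplitz_mat g n = mat n n (\<lambda>(j, l). if j \<le> l then fps_nth g (l - j) else 0)"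

lemma upper_toeplitz_mat_carrier: "upper_toeplitz_mat g n \<in> carrier_mat n n"
  by (simp add: upper_toeplitz_mat_def)

lemma det_upper_toeplitz_mat:
  fixes g :: "'a::comm_ring_1 fps"
  shows "det (upper_toeplitz_mat g n) = fps_nth g 0 ^ n"
proof -
  have "det (upper_toeplitz_mat g n) = prod_list (diag_mat (upper_toeplitz_mat g n))"
    by (rule det_upper_triangular[OF _ upper_toeplitz_mat_carrier])
       (auto simp: upper_triangular_def upper_toeplitz_mat_def)
  also have "\<dots> = prod_list (replicate n (fps_nth g 0))"
    by (intro arg_cong[where f = prod_list] nth_equalityI)
       (auto simp: diag_mat_def upper_toeplitz_mat_def)
  finally show ?thesis by simp
qed

lemma mult_upper_toeplitz_mat_index:
  fixes A :: "'a::comm_semiring_1 mat"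
  assumes A: "A \<in> carrier_mat m n" and "i < m" "l < n"
    and row: "\<And>j. j < n \<Longrightarrow> A $$ (i, j) = fps_nth R j"
  shows "(A * upper_toeplitz_mat g n) $$ (i, l) = fps_nth (R * g) l"
proof -
  have "(A * upper_toeplitz_mat g n) $$ (i, l)
      = (\<Sum>j<n. fps_nth R j * (if j \<le> l then fps_nth g (l - j) else 0))"
    using assms
    by (auto simp: scalar_prod_def upper_toeplitz_mat_def atLeast0LessThan intro!: sum.cong)
  also have "\<dots> = (\<Sum>j=0..l. fps_nth R j * fps_nth g (l - j))"
    using \<open>l < n\<close> by (intro sum.mono_neutral_cong_right) auto
  finally show ?thesis by (simp add: fps_mult_nth)
qed

lemma det_top_row_over_identity:
  fixes N :: "'a::comm_ring_1 mat"
  assumes N: "N \<in> carrier_mat (Suc k) (Suc k)"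
    and rows: "\<And>i l. 0 < i \<Longrightarrow> i \<le> k \<Longrightarrow> l \<le> k \<Longrightarrow>
      N $$ (i, l) = (if l + 1 = i then 1 else 0)"
  shows "det N = (-1) ^ k * N $$ (0, k)"
proof -
  have "det N = (\<Sum>i<Suc k. N $$ (i, k) * cofactor N i k)"
    by (rule laplace_expansion_column[OF N]) simp
  also have "\<dots> = N $$ (0, k) * cofactor N 0 k"
    using rows by (simp add: sum.lessThan_Suc_shift del: sum.lessThan_Suc)
  also have "mat_delete N 0 k = 1\<^sub>m k"
    by (rule eq_matI) (use N rows in \<open>auto simp: mat_delete_def\<close>)
  then have "cofactor N 0 k = (-1) ^ k"
    by (simp add: cofactor_def)
  finally show ?thesis by (simp add: mult.commute)
qed

lemma fps_const_lift_eq_fps_map: "fps_const_lift f = fps_map (\<lambda>c. [:c:]) f"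
  by (simp add: fps_const_lift_def fps_map_def)

lemma fps_const_lift_mult: "fps_const_lift (X * Y) = fps_const_lift X * fps_const_lift Y"
  by (simp add: fps_const_lift_eq_fps_map const_poly_hom.fps_map_mult)

lemma fps_const_lift_inverse_mult:
  fixes f :: "'a::field fps"
  assumes "fps_nth f 0 \<noteq> 0"
  shows "fps_const_lift (inverse f) * fps_const_lift f = 1"
proof -
  have "fps_const_lift (inverse f) * fps_const_lift f = fps_const_lift (inverse f * f)"
    by (simp add: fps_const_lift_mult)
  also have "\<dots> = 1"
    using assms by (simp add: inverse_mult_eq_1 fps_const_lift_eq_fps_map const_poly_hom.fps_map_one)
  finally show ?thesis .
qed

lemma Pmat_index_top_row:
  "j \<le> k \<Longrightarrow> Pmat f k $$ (0, j) = fps_nth (fps_scaled_t f) j"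
  by (simp add: Pmat_def fps_scaled_t_def)

lemma Pmat_index_lower_row:
  "0 < i \<Longrightarrow> i \<le> k \<Longrightarrow> j \<le> k \<Longrightarrow>
    Pmat f k $$ (i, j) = fps_nth (fps_X ^ (i - 1) * fps_const_lift f) j"
  by (auto simp: Pmat_def fps_X_power_mult_nth fps_const_lift_def Suc_diff_le)

lemma Ppoly_eq_nth:
  fixes f :: "'a::field fps"
  assumes f0: "fps_nth f 0 = 1"
  shows "Ppoly f k = fps_nth (fps_scaled_t f * fps_const_lift (inverse f)) k"
proof (cases "k = 0")
  case True
  then show ?thesis
    using f0 by (simp add: Ppoly_def fps_scaled_t_def fps_const_lift_def)
next
  case False
  define g where "g = fps_const_lift (inverse f)"
  define N where "N = Pmat f k * upper_toeplitz_mat g (Suc k)"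
  have M: "Pmat f k \<in> carrier_mat (Suc k) (Suc k)"
    by (simp add: Pmat_def)
  have "det N = det (Pmat f k) * fps_nth g 0 ^ Suc k"
    unfolding N_def by (simp add: det_mult[OF M upper_toeplitz_mat_carrier] det_upper_toeplitz_mat)
  also have "fps_nth g 0 = 1"
    using f0 by (simp add: g_def fps_const_lift_def)
  finally have det_N: "det N = det (Pmat f k)"
    by simp
  have lift_f_g: "fps_const_lift f * g = 1"
    using fps_const_lift_inverse_mult[of f] f0 by (simp add: g_def mult.commute)
  have "det N = (-1) ^ k * N $$ (0, k)"
  proof (rule det_top_row_over_identity)
    show "N \<in> carrier_mat (Suc k) (Suc k)"
      using M by (simp add: N_def upper_toeplitz_mat_carrier)
    fix i l assume "0 < i" "i \<le> k" "l \<le> k"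
    then have "N $$ (i, l) = fps_nth (fps_X ^ (i - 1) * fps_const_lift f * g) l"
      unfolding N_def
      by (intro mult_upper_toeplitz_mat_index[OF M]) (auto simp: Pmat_index_lower_row)
    also have "\<dots> = (if l + 1 = i then 1 else 0)"
      using \<open>0 < i\<close> by (auto simp: mult.assoc lift_f_g)
    finally show "N $$ (i, l) = (if l + 1 = i then 1 else 0)" .
  qed
  also have "N $$ (0, k) = fps_nth (fps_scaled_t f * g) k"
    unfolding N_def by (intro mult_upper_toeplitz_mat_index[OF M]) (auto simp: Pmat_index_top_row)
  finally show ?thesis
    using False det_N by (simp add: Ppoly_def g_def power_mult_distrib[symmetric])
qed

lemma Ppoly_generating_function:
  fixes f :: "'a::field fps"
  assumes "fps_nth f 0 = 1"
  shows "Abs_fps (Ppoly f) = fps_scaled_t f * fps_const_lift (inverse f)"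
  by (rule fps_ext) (simp add: Ppoly_eq_nth[OF assms])

lemma eval2_eq_pcompose: "eval2 p u = pcompose (map_poly (\<lambda>c. [:c:]) p) u"
  by (simp add: eval2_def pcompose_altdef map_poly_map_poly comp_def)

interpretation eval2_hom: comm_semiring_hom "\<lambda>p. eval2 p u" for u
proof
  fix p q
  show "eval2 (p + q) u = eval2 p u + eval2 q u"
    by (simp only: eval2_eq_pcompose const_poly_hom.map_poly_hom_add pcompose_add)
  show "eval2 (p * q) u = eval2 p u * eval2 q u"
    by (simp only: eval2_eq_pcompose const_poly_hom.map_poly_hom_mult pcompose_mult)
qed (simp_all add: eval2_def)

lemma fps_map_eval2_fps_const_lift:
  "fps_map (\<lambda>p. eval2 p u) (fps_const_lift g) = fps_map (\<lambda>p. [:p:]) (fps_const_lift g)"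
  by (rule fps_ext) (simp add: fps_const_lift_def eval2_def map_poly_pCons)

lemma fps_map_eval2_fps_scaled_t:
  "fps_map (\<lambda>p. eval2 p u) (fps_scaled_t f)
    = fps_map (\<lambda>p. [:p:]) (fps_const_lift f) oo (fps_const u * fps_X)"
  by (rule fps_ext)
    (simp add: fps_scaled_t_def fps_const_lift_def fps_compose_linear eval2_def
      map_poly_monom poly_monom)

lemma eval2_Ppoly_generating_function:
  fixes f :: "'a::field fps"
  assumes "fps_nth f 0 = 1"
  shows "Abs_fps (\<lambda>k. eval2 (Ppoly f k) u)
    = (fps_map (\<lambda>p. [:p:]) (fps_const_lift f) oo (fps_const u * fps_X))
      * fps_map (\<lambda>p. [:p:]) (fps_const_lift (inverse f))"
proof -
  have "Abs_fps (\<lambda>k. eval2 (Ppoly f k) u) = fps_map (\<lambda>p. eval2 p u) (Abs_fps (Ppoly f))"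
    by (simp add: fps_map_def)
  then show ?thesis
    by (simp add: Ppoly_generating_function[OF assms] eval2_hom.fps_map_mult
        fps_map_eval2_fps_const_lift fps_map_eval2_fps_scaled_t)
qed

lemma eval2_Ppoly_generating_function_mult:
  fixes f :: "'a::field fps"
  assumes f0: "fps_nth f 0 = 1"
  shows "Abs_fps (\<lambda>k. eval2 (Ppoly f k) (s * t))
    = (Abs_fps (\<lambda>k. eval2 (Ppoly f k) s) oo (fps_const t * fps_X))
      * Abs_fps (\<lambda>k. eval2 (Ppoly f k) t)"
proof -
  define F where "F g = fps_map (\<lambda>p. [:p:]) (fps_const_lift g)" for g :: "'a fps"
  have inverse_cancel: "F (inverse f) * F f = 1"
    using fps_const_lift_inverse_mult[of f] f0
    by (simp add: F_def flip: const_poly_hom.fps_map_mult) (simp add: const_poly_hom.fps_map_one)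
  have "(Abs_fps (\<lambda>k. eval2 (Ppoly f k) s) oo (fps_const t * fps_X))
        * Abs_fps (\<lambda>k. eval2 (Ppoly f k) t)
      = (F f oo (fps_const s * fps_X) oo (fps_const t * fps_X))
        * (F (inverse f) oo (fps_const t * fps_X)) * ((F f oo (fps_const t * fps_X)) * F (inverse f))"
    by (simp only: eval2_Ppoly_generating_function[OF f0] F_def fps_compose_scale_mult)
  also have "\<dots> = (F f oo (fps_const (s * t) * fps_X))
      * ((F (inverse f) * F f) oo (fps_const t * fps_X)) * F (inverse f)"
    by (simp only: fps_compose_scale_scale fps_compose_scale_mult mult.assoc)
  also have "\<dots> = Abs_fps (\<lambda>k. eval2 (Ppoly f k) (s * t))"
    unfolding inverse_cancel
    by (simp only: fps_compose_1 mult_1_right eval2_Ppoly_generating_function[OF f0] F_def)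
  finally show ?thesis ..
qed

theorem theorem1p1:
  fixes f :: "'a::field fps"
  assumes "fps_nth f 0 = 1"
  shows "fps_scaled_t f = fps_const_lift f * Abs_fps (\<lambda>k. Ppoly f k) \<and>
         (\<forall>k. eval2 (Ppoly f k) (var_s * var_t) =
           (\<Sum>i\<le>k. eval2 (Ppoly f i) var_s * eval2 (Ppoly f (k - i)) var_t * var_t ^ i))"
proof (intro conjI allI)
  have "fps_const_lift f * Abs_fps (Ppoly f)
      = fps_scaled_t f * (fps_const_lift (inverse f) * fps_const_lift f)"
    by (simp add: Ppoly_generating_function[OF assms] mult_ac)
  also have "\<dots> = fps_scaled_t f"
    using fps_const_lift_inverse_mult[of f] assms by simp
  finally show "fps_scaled_t f = fps_const_lift f * Abs_fps (\<lambda>k. Ppoly f k)"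
    by simp
next
  fix k
  have "eval2 (Ppoly f k) (var_s * var_t) = (\<Sum>i=0..k.
      fps_nth (Abs_fps (\<lambda>k. eval2 (Ppoly f k) var_s) oo (fps_const var_t * fps_X)) i
      * eval2 (Ppoly f (k - i)) var_t)"
    using arg_cong[OF eval2_Ppoly_generating_function_mult[OF assms, of var_s var_t],
        of "\<lambda>X. fps_nth X k"]
    by (simp only: fps_nth_Abs_fps fps_mult_nth)
  then show "eval2 (Ppoly f k) (var_s * var_t) =
      (\<Sum>i\<le>k. eval2 (Ppoly f i) var_s * eval2 (Ppoly f (k - i)) var_t * var_t ^ i)"
    unfolding fps_compose_linear by (simp add: atLeast0AtMost mult_ac)
qed

end
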